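(* Let $S,Q$ be disjoint finite sets, $\mathcal{M}_S,\mathcal{M}_Q$ matroids on $S$, $Q$, and $A\subseteq S$, $B\subseteq Q$. Then the principal sum $(\mathcal{M}_S,\mathcal{M}_Q;A,B)$ is $\{S,Q\}$-complete.
   Context: Matroids on finite sets, given by bases. For matroids on the same set, $\mathcal{M}_1\vee\mathcal{M}_2$ has bases the maximal sets $b_1\cup b_2$; $\mathbf{0}_X$ has only base $\emptyset$. Let $r_{\mathcal{M}_S}$ be the rank function of $\mathcal{M}_S$. $\mathcal{M}_{SB}$ is the matroid on $S\uplus B$ with rank function $r(X\uplus B_1):=r_{\mathcal{M}_S}(X)+\min\big(r_{\mathcal{M}_S}(X\cup A)-r_{\mathcal{M}_S}(X),\,|B_1|\big)$ for $X\subseteq S$, $B_1\subseteq B$. The principal sum is $(\mathcal{M}_S,\mathcal{M}_Q;A,B):=(\mathcal{M}_{SB}\oplus\mathbf{0}_{Q-B})\vee(\mathcal{M}_Q\oplus\mathbf{0}_S)$, a matroid on $S\uplus Q$. A matroid $\mathcal{M}_{SQ}$ on $S\uplus Q$ is $\{S,Q\}$-complete if whenever $b_S,b'_S\subseteq S$, $b_Q,b'_Q\subseteq Q$ and $b_S\uplus b_Q$, $b_S\uplus b'_Q$, $b'_S\uplus b_Q$ are bases, then $b'_S\uplus b'_Q$ is a base. *)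

theory Defs
  imports Main
begin

definition matroid :: "'a set \<Rightarrow> 'a set set \<Rightarrow> bool" where
  "matroid E \<B> \<longleftrightarrow> finite E \<and> \<B> \<noteq> {} \<and> (\<forall>b\<in>\<B>. b \<subseteq> E) \<and>
     (\<forall>b1\<in>\<B>. \<forall>b2\<in>\<B>. \<forall>x\<in>b1 - b2. \<exists>y\<in>b2 - b1. insert y (b1 - {x}) \<in> \<B>)"

definition rank_of :: "'a set set \<Rightarrow> 'a set \<Rightarrow> nat" where
  "rank_of \<B> X = Max ((\<lambda>b. card (X \<inter> b)) ` \<B>)"

definition bases_of_rank :: "'a set \<Rightarrow> ('a set \<Rightarrow> nat) \<Rightarrow> 'a set set" where
  "bases_of_rank E r = {X. X \<subseteq> E \<and> r X = card X \<and> r X = r E}"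

definition rank_SB :: "'a set set \<Rightarrow> 'a set \<Rightarrow> 'a set \<Rightarrow> 'a set \<Rightarrow> 'a set \<Rightarrow> nat" where
  "rank_SB \<B>S S A B Y =
     rank_of \<B>S (Y \<inter> S) + min (rank_of \<B>S ((Y \<inter> S) \<union> A) - rank_of \<B>S (Y \<inter> S)) (card (Y \<inter> B))"

definition bases_SB :: "'a set set \<Rightarrow> 'a set \<Rightarrow> 'a set \<Rightarrow> 'a set \<Rightarrow> 'a set set" where
  "bases_SB \<B>S S A B = bases_of_rank (S \<union> B) (rank_SB \<B>S S A B)"

text \<open>Matroid union by bases: the inclusion-maximal sets of the form b1 \<union> b2.
  (Direct sums with free-of-rank-zero matroids 0_X do not change the family of bases.)\<close>
definition union_bases :: "'a set set \<Rightarrow> 'a set set \<Rightarrow> 'a set set" where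
  "union_bases \<B>1 \<B>2 =
     {X. (\<exists>b1\<in>\<B>1. \<exists>b2\<in>\<B>2. X = b1 \<union> b2) \<and>
         \<not> (\<exists>b1\<in>\<B>1. \<exists>b2\<in>\<B>2. X \<subset> b1 \<union> b2)}"

text \<open>Bases of the principal sum (M_S, M_Q; A, B), a matroid on S \<union> Q:
  (M_SB \<oplus> 0_{Q-B}) \<or> (M_Q \<oplus> 0_S).\<close>
definition principal_sum :: "'a set \<Rightarrow> 'a set set \<Rightarrow> 'a set \<Rightarrow> 'a set set \<Rightarrow> 'a set \<Rightarrow> 'a set \<Rightarrow> 'a set set" where
  "principal_sum S \<B>S Q \<B>Q A B = union_bases (bases_SB \<B>S S A B) \<B>Q"

definition SQ_complete :: "'a set \<Rightarrow> 'a set \<Rightarrow> 'a set set \<Rightarrow> bool" where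
  "SQ_complete S Q \<B> \<longleftrightarrow>
     (\<forall>bS bS' bQ bQ'. bS \<subseteq> S \<longrightarrow> bS' \<subseteq> S \<longrightarrow> bQ \<subseteq> Q \<longrightarrow> bQ' \<subseteq> Q \<longrightarrow>
        bS \<union> bQ \<in> \<B> \<longrightarrow> bS \<union> bQ' \<in> \<B> \<longrightarrow> bS' \<union> bQ \<in> \<B> \<longrightarrow> bS' \<union> bQ' \<in> \<B>)"

end

(*
  Write r for the rank function of M_S. A set Y \<subseteq> S \<union> B is a base of M_SB iff Y \<inter> S is
  independent in M_S, |Y| = r(S) and |Y \<inter> B| \<le> r((Y \<inter> S) \<union> A) - r(Y \<inter> S); in particular
  whether Y is a base depends only on Y \<inter> S and on |Y \<inter> B|. If a base of M_SB and a base of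
  M_Q shared an element e \<in> B, then e could be traded in the M_SB-base for a new element of S,
  so the union would not be maximal. Hence the bases of the principal sum are exactly the
  disjoint unions b1 \<union> b2 of an M_SB-base and an M_Q-base, all of size r(S) + r_Q(Q).

  Now let bS \<union> bQ, bS \<union> bQ' and bS' \<union> bQ be bases. The first and the last have the same
  size, so |bS| = |bS'|. Decompose bS \<union> bQ' = c1 \<union> c2; then c1 \<inter> S = bS and
  |c1 \<inter> B| = r(S) - |bS|. The M_SB-part of bS' \<union> bQ has S-part bS' and the same number
  r(S) - |bS'| of elements in B, so bS' \<union> (c1 \<inter> B) is an M_SB-base too, and its union with
  c2 is bS' \<union> bQ'.
*)
theory Submission
  imports Defs
begin

lemma matroid_finite_ground: "matroid E \<B> \<Longrightarrow> finite E"
  unfolding matroid_def by blast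

lemma matroid_base_subset: "matroid E \<B> \<Longrightarrow> b \<in> \<B> \<Longrightarrow> b \<subseteq> E"
  unfolding matroid_def by blast

lemma matroid_finite_base: "matroid E \<B> \<Longrightarrow> b \<in> \<B> \<Longrightarrow> finite b"
  by (meson finite_subset matroid_base_subset matroid_finite_ground)

lemma matroid_finite_bases: "matroid E \<B> \<Longrightarrow> finite \<B>"
  unfolding matroid_def by (meson Pow_iff finite_Pow_iff finite_subset subsetI)

lemma matroid_bases_card_le:
  assumes "matroid E \<B>" "b1 \<in> \<B>" "b2 \<in> \<B>"
  shows "card b1 \<le> card b2"
  using assms(2)
proof (induction "card (b1 - b2)" arbitrary: b1 rule: less_induct)
  case less
  have fin: "finite b1" "finite b2" using less.prems assms matroid_finite_base by blast+
  show ?case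
  proof (cases "b1 \<subseteq> b2")
    case True
    then show ?thesis using fin by (simp add: card_mono)
  next
    case False
    then obtain x where x: "x \<in> b1 - b2" by blast
    then obtain y where y: "y \<in> b2 - b1" and exchanged: "insert y (b1 - {x}) \<in> \<B>"
      using assms less.prems unfolding matroid_def by blast
    have "card b1 > 0" using x fin(1) card_gt_0_iff by blast
    then have "card (insert y (b1 - {x})) = card b1"
      using x y fin by (simp add: card_Diff_singleton)
    moreover have "insert y (b1 - {x}) - b2 = (b1 - b2) - {x}" using y by auto
    with x fin have "card (insert y (b1 - {x}) - b2) < card (b1 - b2)"
      by (metis card_Diff1_less finite_Diff)
    ultimately show ?thesis using less.hyps exchanged by fastforce
  qed
qed

lemma matroid_bases_card_eq:
  "matroid E \<B> \<Longrightarrow> b1 \<in> \<B> \<Longrightarrow> b2 \<in> \<B> \<Longrightarrow> card b1 = card b2"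
  by (meson le_antisym matroid_bases_card_le)

lemma matroid_bases_nonempty: "matroid E \<B> \<Longrightarrow> \<B> \<noteq> {}"
  unfolding matroid_def by blast

lemma rank_of_le_iff:
  "matroid E \<B> \<Longrightarrow> rank_of \<B> X \<le> k \<longleftrightarrow> (\<forall>b\<in>\<B>. card (X \<inter> b) \<le> k)"
  unfolding rank_of_def by (simp add: matroid_finite_bases matroid_bases_nonempty)

lemma card_Int_base_le_rank_of: "matroid E \<B> \<Longrightarrow> b \<in> \<B> \<Longrightarrow> card (X \<inter> b) \<le> rank_of \<B> X"
  using rank_of_le_iff by blast

lemma rank_of_attained: "matroid E \<B> \<Longrightarrow> \<exists>b\<in>\<B>. rank_of \<B> X = card (X \<inter> b)"
  unfolding rank_of_def
  by (metis (no_types, lifting) Max_in finite_imageI image_iff image_is_empty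
      matroid_bases_nonempty matroid_finite_bases)

lemma rank_of_le_card: "matroid E \<B> \<Longrightarrow> finite X \<Longrightarrow> rank_of \<B> X \<le> card X"
  by (simp add: rank_of_le_iff card_mono)

lemma rank_of_mono: "matroid E \<B> \<Longrightarrow> X \<subseteq> Y \<Longrightarrow> finite Y \<Longrightarrow> rank_of \<B> X \<le> rank_of \<B> Y"
  by (meson card_Int_base_le_rank_of card_mono finite_Int inf_mono order.refl order.trans
      rank_of_le_iff)

lemma rank_of_subset_base: "matroid E \<B> \<Longrightarrow> X \<subseteq> b \<Longrightarrow> b \<in> \<B> \<Longrightarrow> rank_of \<B> X = card X"
  by (metis Int_absorb2 card_Int_base_le_rank_of finite_subset le_antisym matroid_finite_base
      rank_of_le_card)

lemma rank_of_ground: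
  assumes "matroid E \<B>" "b \<in> \<B>"
  shows "rank_of \<B> E = card b"
proof -
  have "card b \<le> rank_of \<B> E"
    using card_Int_base_le_rank_of[OF assms, of E] matroid_base_subset[OF assms] by (simp add: Int_absorb1)
  moreover have "card (E \<inter> b') \<le> card b" if "b' \<in> \<B>" for b'
    using that assms matroid_bases_card_eq[OF assms(1) that assms(2)] matroid_finite_base
    by (metis card_mono inf_le2)
  ultimately show ?thesis using rank_of_le_iff[OF assms(1)] by (meson le_antisym)
qed

lemma subset_base_if_rank_of_eq_card:
  assumes "matroid E \<B>" "finite X" "rank_of \<B> X = card X"
  obtains b where "b \<in> \<B>" "X \<subseteq> b"
proof -
  obtain b where "b \<in> \<B>" "card X = card (X \<inter> b)"
    using rank_of_attained[OF assms(1)] assms(3) by metis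
  then show thesis using that assms(2) by (metis Int_lower1 Int_lower2 card_subset_eq)
qed

lemma disjoint_union_in_union_bases:
  assumes "\<And>b. b \<in> \<B>1 \<Longrightarrow> finite b \<and> card b = r1"
    and "\<And>b. b \<in> \<B>2 \<Longrightarrow> finite b \<and> card b = r2"
    and "b1 \<in> \<B>1" "b2 \<in> \<B>2" "b1 \<inter> b2 = {}"
  shows "b1 \<union> b2 \<in> union_bases \<B>1 \<B>2"
proof -
  have "\<not> b1 \<union> b2 \<subset> c1 \<union> c2" if "c1 \<in> \<B>1" "c2 \<in> \<B>2" for c1 c2
  proof
    assume "b1 \<union> b2 \<subset> c1 \<union> c2"
    then have "card (b1 \<union> b2) < card (c1 \<union> c2)"
      using that assms(1,2) by (simp add: psubset_card_mono)
    also have "\<dots> \<le> card c1 + card c2" by (rule card_Un_le)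
    also have "\<dots> = card (b1 \<union> b2)" using that assms by (simp add: card_Un_disjoint)
    finally show False by simp
  qed
  then show ?thesis unfolding union_bases_def using assms(3,4) by blast
qed

locale principal_extension =
  fixes S :: "'a set" and \<B>S :: "'a set set" and A B :: "'a set"
  assumes matroid_S: "matroid S \<B>S" and A_subset_S: "A \<subseteq> S"
    and finite_B: "finite B" and S_B_disjoint: "S \<inter> B = {}"
begin

lemma finite_S: "finite S"
  using matroid_finite_ground[OF matroid_S] .

lemma card_split:
  assumes "Y \<subseteq> S \<union> B"
  shows "card Y = card (Y \<inter> S) + card (Y \<inter> B)"
proof -
  have "card ((Y \<inter> S) \<union> (Y \<inter> B)) = card (Y \<inter> S) + card (Y \<inter> B)"
    using finite_S finite_B S_B_disjoint by (intro card_Un_disjoint) auto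
  moreover have "(Y \<inter> S) \<union> (Y \<inter> B) = Y" using assms by blast
  ultimately show ?thesis by simp
qed

lemma bases_SB_iff:
  "Y \<in> bases_SB \<B>S S A B \<longleftrightarrow>
     Y \<subseteq> S \<union> B \<and> rank_of \<B>S (Y \<inter> S) = card (Y \<inter> S) \<and>
     card (Y \<inter> S) + card (Y \<inter> B) = rank_of \<B>S S \<and>
     card (Y \<inter> B) \<le> rank_of \<B>S (Y \<inter> S \<union> A) - rank_of \<B>S (Y \<inter> S)"
proof -
  have top: "rank_SB \<B>S S A B (S \<union> B) = rank_of \<B>S S"
    unfolding rank_SB_def using A_subset_S by (simp add: Int_absorb2 sup.absorb1)
  have "rank_of \<B>S (Y \<inter> S) \<le> card (Y \<inter> S)"
    using rank_of_le_card[OF matroid_S] finite_S by simp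
  then show ?thesis
    unfolding bases_SB_def bases_of_rank_def mem_Collect_eq top
    by (cases "Y \<subseteq> S \<union> B") (auto simp: rank_SB_def card_split min_def)
qed

lemma card_bases_SB: "Y \<in> bases_SB \<B>S S A B \<Longrightarrow> card Y = rank_of \<B>S S"
  by (simp add: bases_SB_iff card_split)

lemma bases_SB_exchange:
  assumes Y: "Y \<in> bases_SB \<B>S S A B" and e: "e \<in> Y \<inter> B"
  obtains s where "s \<in> S - Y" "insert s (Y - {e}) \<in> bases_SB \<B>S S A B"
proof -
  define X where "X = Y \<inter> S"
  have YSB: "Y \<subseteq> S \<union> B" and indep: "rank_of \<B>S X = card X"
    and size: "card X + card (Y \<inter> B) = rank_of \<B>S S"
    and room: "card (Y \<inter> B) \<le> rank_of \<B>S (X \<union> A) - rank_of \<B>S X"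
    using Y unfolding bases_SB_iff X_def by auto
  obtain b where b: "b \<in> \<B>S" "X \<subseteq> b"
    using subset_base_if_rank_of_eq_card[OF matroid_S _ indep] finite_S X_def by blast
  have "card (Y \<inter> B) > 0" using e finite_B card_gt_0_iff by blast
  then have "card X < card b" using size rank_of_ground[OF matroid_S b(1)] by simp
  then obtain s where s: "s \<in> b" "s \<notin> X"
    using b(2) by (metis card_mono matroid_finite_base[OF matroid_S b(1)] finite_subset not_le subsetI)
  have "s \<in> S" using s(1) matroid_base_subset[OF matroid_S b(1)] by blast
  with s(2) have "s \<notin> Y" unfolding X_def by blast
  define Y' where "Y' = insert s (Y - {e})"
  have Y'S: "Y' \<inter> S = insert s X" and Y'B: "Y' \<inter> B = (Y \<inter> B) - {e}"
    unfolding Y'_def X_def using \<open>s \<in> S\<close> e S_B_disjoint by auto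
  have "rank_of \<B>S (insert s X) = card X + 1"
    using rank_of_subset_base[OF matroid_S _ b(1)] s b(2) finite_S X_def by simp
  moreover have "rank_of \<B>S (X \<union> A) \<le> rank_of \<B>S (insert s X \<union> A)"
    using rank_of_mono[OF matroid_S] finite_S A_subset_S \<open>s \<in> S\<close> X_def
    by (simp add: finite_subset subset_insertI)
  moreover have "card ((Y \<inter> B) - {e}) = card (Y \<inter> B) - 1" using e by simp
  moreover have "card (insert s X) = card X + 1" using s(2) finite_S X_def by simp
  ultimately have "Y' \<in> bases_SB \<B>S S A B"
    unfolding bases_SB_iff Y'S Y'B using YSB indep size room \<open>card (Y \<inter> B) > 0\<close> \<open>s \<in> S\<close>
    unfolding Y'_def by auto
  then show thesis using that \<open>s \<in> S\<close> \<open>s \<notin> Y\<close> unfolding Y'_def by blast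
qed

lemma bases_SB_replace_S_part:
  assumes Y: "Y \<in> bases_SB \<B>S S A B" and Y': "Y' \<in> bases_SB \<B>S S A B"
    and same_card: "card (Y' \<inter> S) = card (Y \<inter> S)"
  shows "(Y' \<inter> S) \<union> (Y \<inter> B) \<in> bases_SB \<B>S S A B"
proof -
  have "((Y' \<inter> S) \<union> (Y \<inter> B)) \<inter> S = Y' \<inter> S" "((Y' \<inter> S) \<union> (Y \<inter> B)) \<inter> B = Y \<inter> B"
    using S_B_disjoint by auto
  moreover have "card (Y \<inter> B) = card (Y' \<inter> B)"
    using Y Y' same_card unfolding bases_SB_iff by simp
  ultimately show ?thesis using Y Y' unfolding bases_SB_iff by auto
qed

end

locale principal_sum_setting =
  fixes S Q A B :: "'a set" and \<B>S \<B>Q :: "'a set set"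
  assumes matroid_S: "matroid S \<B>S" and matroid_Q: "matroid Q \<B>Q"
    and S_Q_disjoint: "S \<inter> Q = {}" and A_subset_S: "A \<subseteq> S" and B_subset_Q: "B \<subseteq> Q"

sublocale principal_sum_setting \<subseteq> principal_extension S \<B>S A B
proof
  show "finite B"
    using B_subset_Q matroid_finite_ground[OF matroid_Q] finite_subset by blast
  show "S \<inter> B = {}" using S_Q_disjoint B_subset_Q by blast
qed (fact matroid_S A_subset_S)+

context principal_sum_setting
begin

lemma bases_SB_subset: "Y \<in> bases_SB \<B>S S A B \<Longrightarrow> Y \<subseteq> S \<union> B"
  by (simp add: bases_SB_iff)

lemma bases_SB_finite: "Y \<in> bases_SB \<B>S S A B \<Longrightarrow> finite Y"
  using bases_SB_subset finite_S finite_B by (meson finite_UnI finite_subset)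

lemma principal_sum_disjoint_decomp:
  assumes "Z \<in> principal_sum S \<B>S Q \<B>Q A B"
  obtains b1 b2 where "b1 \<in> bases_SB \<B>S S A B" "b2 \<in> \<B>Q" "b1 \<inter> b2 = {}" "Z = b1 \<union> b2"
proof -
  have maximal: "\<And>c1 c2. c1 \<in> bases_SB \<B>S S A B \<Longrightarrow> c2 \<in> \<B>Q \<Longrightarrow> \<not> Z \<subset> c1 \<union> c2"
    using assms unfolding principal_sum_def union_bases_def by simp
  obtain b1 b2 where b1: "b1 \<in> bases_SB \<B>S S A B" and b2: "b2 \<in> \<B>Q" and Z: "Z = b1 \<union> b2"
    using assms unfolding principal_sum_def union_bases_def by auto
  have "b1 \<inter> b2 = {}"
  proof (rule ccontr)
    assume "b1 \<inter> b2 \<noteq> {}"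
    then obtain e where "e \<in> b1" "e \<in> b2" by blast
    then have "e \<in> b1 \<inter> B"
      using bases_SB_subset[OF b1] matroid_base_subset[OF matroid_Q b2] S_Q_disjoint by blast
    then obtain s where s: "s \<in> S - b1" and b1': "insert s (b1 - {e}) \<in> bases_SB \<B>S S A B"
      using bases_SB_exchange[OF b1] by blast
    have "s \<notin> Z" using s matroid_base_subset[OF matroid_Q b2] S_Q_disjoint unfolding Z by blast
    moreover have "insert s (b1 - {e}) \<union> b2 = insert s Z" using \<open>e \<in> b2\<close> unfolding Z by blast
    ultimately show False using maximal[OF b1' b2] by auto
  qed
  then show thesis using that b1 b2 Z by blast
qed

lemma disjoint_union_in_principal_sum:
  assumes "b1 \<in> bases_SB \<B>S S A B" "b2 \<in> \<B>Q" "b1 \<inter> b2 = {}"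
  shows "b1 \<union> b2 \<in> principal_sum S \<B>S Q \<B>Q A B"
  unfolding principal_sum_def
proof (rule disjoint_union_in_union_bases[OF _ _ assms])
  show "finite b \<and> card b = rank_of \<B>S S" if "b \<in> bases_SB \<B>S S A B" for b
    using that bases_SB_finite card_bases_SB by blast
  show "finite b \<and> card b = rank_of \<B>Q Q" if "b \<in> \<B>Q" for b
    using that matroid_finite_base[OF matroid_Q] rank_of_ground[OF matroid_Q] by simp
qed

lemma card_principal_sum:
  assumes "Z \<in> principal_sum S \<B>S Q \<B>Q A B"
  shows "card Z = rank_of \<B>S S + rank_of \<B>Q Q"
proof -
  obtain b1 b2 where b1: "b1 \<in> bases_SB \<B>S S A B" and b2: "b2 \<in> \<B>Q"
    and "b1 \<inter> b2 = {}" "Z = b1 \<union> b2"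
    using principal_sum_disjoint_decomp[OF assms] .
  moreover have "finite b1" using bases_SB_finite[OF b1] .
  moreover have "finite b2" using matroid_finite_base[OF matroid_Q b2] .
  ultimately show ?thesis
    using card_bases_SB[OF b1] rank_of_ground[OF matroid_Q b2] by (simp add: card_Un_disjoint)
qed

lemma principal_sum_card_S_part_eq:
  assumes "X \<subseteq> S" "X' \<subseteq> S" "Y \<subseteq> Q"
    and "X \<union> Y \<in> principal_sum S \<B>S Q \<B>Q A B" "X' \<union> Y \<in> principal_sum S \<B>S Q \<B>Q A B"
  shows "card X = card X'"
proof -
  have "finite X" "finite X'" "finite Y"
    using assms(1-3) finite_S matroid_finite_ground[OF matroid_Q] by (auto intro: finite_subset)
  moreover have "X \<inter> Y = {}" "X' \<inter> Y = {}" using assms(1-3) S_Q_disjoint by blast+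
  moreover have "card (X \<union> Y) = card (X' \<union> Y)"
    using card_principal_sum assms(4,5) by simp
  ultimately show ?thesis by (simp add: card_Un_disjoint)
qed

theorem SQ_complete_principal_sum: "SQ_complete S Q (principal_sum S \<B>S Q \<B>Q A B)"
  unfolding SQ_complete_def
proof (intro allI impI)
  fix bS bS' bQ bQ'
  assume "bS \<subseteq> S" "bS' \<subseteq> S" "bQ \<subseteq> Q" "bQ' \<subseteq> Q"
    and base: "bS \<union> bQ \<in> principal_sum S \<B>S Q \<B>Q A B"
    and base': "bS \<union> bQ' \<in> principal_sum S \<B>S Q \<B>Q A B"
    and base'': "bS' \<union> bQ \<in> principal_sum S \<B>S Q \<B>Q A B"
  obtain c1 c2 where c1: "c1 \<in> bases_SB \<B>S S A B" and c2: "c2 \<in> \<B>Q" and "c1 \<inter> c2 = {}"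
    and c: "bS \<union> bQ' = c1 \<union> c2"
    using principal_sum_disjoint_decomp[OF base'] .
  obtain d1 d2 where d1: "d1 \<in> bases_SB \<B>S S A B" and d2: "d2 \<in> \<B>Q"
    and d: "bS' \<union> bQ = d1 \<union> d2"
    using principal_sum_disjoint_decomp[OF base''] .
  note parts = bases_SB_subset[OF c1] bases_SB_subset[OF d1] matroid_base_subset[OF matroid_Q c2]
    matroid_base_subset[OF matroid_Q d2] S_Q_disjoint B_subset_Q
    \<open>bS \<subseteq> S\<close> \<open>bS' \<subseteq> S\<close> \<open>bQ \<subseteq> Q\<close> \<open>bQ' \<subseteq> Q\<close>
  have "c1 \<inter> S = bS" "d1 \<inter> S = bS'" "bQ' = (c1 \<inter> B) \<union> c2"
    using c d parts by blast+
  moreover have "card bS' = card bS"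
    using principal_sum_card_S_part_eq[OF \<open>bS \<subseteq> S\<close> \<open>bS' \<subseteq> S\<close> \<open>bQ \<subseteq> Q\<close> base base''] ..
  ultimately have "bS' \<union> (c1 \<inter> B) \<in> bases_SB \<B>S S A B"
    using bases_SB_replace_S_part[OF c1 d1] by simp
  moreover have "(bS' \<union> (c1 \<inter> B)) \<inter> c2 = {}" using \<open>c1 \<inter> c2 = {}\<close> parts by blast
  ultimately have "(bS' \<union> (c1 \<inter> B)) \<union> c2 \<in> principal_sum S \<B>S Q \<B>Q A B"
    using disjoint_union_in_principal_sum[OF _ c2] by blast
  then show "bS' \<union> bQ' \<in> principal_sum S \<B>S Q \<B>Q A B"
    using \<open>bQ' = (c1 \<inter> B) \<union> c2\<close> by (simp add: sup_assoc)
qed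

end

theorem corollary3:
  fixes S Q A B :: "'a set" and \<B>S \<B>Q :: "'a set set"
  assumes "finite S" and "finite Q" and "S \<inter> Q = {}"
    and "matroid S \<B>S" and "matroid Q \<B>Q"
    and "A \<subseteq> S" and "B \<subseteq> Q"
  shows "SQ_complete S Q (principal_sum S \<B>S Q \<B>Q A B)"
proof -
  interpret principal_sum_setting S Q A B \<B>S \<B>Q
    using assms by unfold_locales
  show ?thesis by (rule SQ_complete_principal_sum)
qed

end
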